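(* Let $T$ be the tree with two vertices $v,w$ of degree $3$ and four leaves (edges $e_1,e_2$ join $v$ to leaves, $e_3=vw$, edges $e_4,e_5$ join $w$ to leaves), with bias $b$ on each of $e_1,e_2,e_4,e_5$ and bias $1-4b$ on $e_3$, where $b$ is the unique zero of $105b^3-90b^2+24b-2$ in $0<b<1/4$. Then \[E_T=\frac{4(1-3b)(5b^2-5b+1)}{(7b-2)^2},\] which lies in $(0.8797,0.8798)$. Hence $c^*=0.8798$ is $5$-admissible.
   Context: A biased tree $T$ on $k$ edges is a tree with edges $e_1,\dots,e_k$ in which every non-leaf vertex has degree $3$, together with nonnegative numbers (biases) $b_1,\dots,b_k$ with $b_1+\cdots+b_k=1$. Let $\mathcal P$ be the set of subgraphs of $T$ that are maximal (under inclusion) among subgraphs that are unions of vertex-disjoint paths, each path beginning and ending at leaf vertices of $T$. Define $f_T(x_1,\dots,x_k)=\max_{P\in\mathcal P}\sum_{i:e_i\in E(P)}b_ix_i$ and \[E_T=\int_0^\infty\!\!\cdots\int_0^\infty f_T(x_1,\dots,x_k)e^{-x_1-\cdots-x_k}\,dx_1\cdots dx_k.\] A positive constant $c^*$ is $k$-admissible if $E_T<c^*$ for some biased tree $T$ on $k$ edges. *)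

theory Defs
  imports "HOL-Analysis.Analysis"
begin

text \<open>A graph is given by a vertex set V :: nat set and k edges, the edge with
index i (for i < k) being the two-element vertex set E i.  Edges e_1..e_k of
the paper correspond to indices 0..k-1.\<close>

definition tdeg :: "nat \<Rightarrow> (nat \<Rightarrow> nat set) \<Rightarrow> nat \<Rightarrow> nat" where
  "tdeg k E v = card {i. i < k \<and> v \<in> E i}"

definition tpath :: "nat \<Rightarrow> (nat \<Rightarrow> nat set) \<Rightarrow> nat list \<Rightarrow> bool" where
  "tpath k E ps \<longleftrightarrow> ps \<noteq> [] \<and> distinct ps \<and>
     (\<forall>j. Suc j < length ps \<longrightarrow> (\<exists>i<k. E i = {ps ! j, ps ! Suc j}))"

definition path_edges :: "nat \<Rightarrow> (nat \<Rightarrow> nat set) \<Rightarrow> nat list \<Rightarrow> nat set" where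
  "path_edges k E ps = {i. i < k \<and> (\<exists>j. Suc j < length ps \<and> E i = {ps ! j, ps ! Suc j})}"

definition is_tree :: "nat set \<Rightarrow> nat \<Rightarrow> (nat \<Rightarrow> nat set) \<Rightarrow> bool" where
  "is_tree V k E \<longleftrightarrow> finite V \<and> card V = k + 1 \<and>
     (\<forall>i<k. E i \<subseteq> V \<and> card (E i) = 2) \<and> inj_on E {..<k} \<and>
     (\<forall>u\<in>V. \<forall>v\<in>V. \<exists>ps. tpath k E ps \<and> hd ps = u \<and> last ps = v)"

definition is_leaf :: "nat set \<Rightarrow> nat \<Rightarrow> (nat \<Rightarrow> nat set) \<Rightarrow> nat \<Rightarrow> bool" where
  "is_leaf V k E v \<longleftrightarrow> v \<in> V \<and> tdeg k E v = 1"

definition is_biased_tree :: "nat set \<Rightarrow> nat \<Rightarrow> (nat \<Rightarrow> nat set) \<Rightarrow> (nat \<Rightarrow> real) \<Rightarrow> bool" where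
  "is_biased_tree V k E b \<longleftrightarrow> is_tree V k E \<and>
     (\<forall>v\<in>V. \<not> is_leaf V k E v \<longrightarrow> tdeg k E v = 3) \<and>
     (\<forall>i<k. 0 \<le> b i) \<and> (\<Sum>i<k. b i) = 1"

definition leaf_path :: "nat set \<Rightarrow> nat \<Rightarrow> (nat \<Rightarrow> nat set) \<Rightarrow> nat list \<Rightarrow> bool" where
  "leaf_path V k E ps \<longleftrightarrow> tpath k E ps \<and> 2 \<le> length ps \<and>
     is_leaf V k E (hd ps) \<and> is_leaf V k E (last ps)"

text \<open>Subgraphs that are unions of vertex-disjoint leaf-to-leaf paths, represented by
their edge sets (the vertex set of such a subgraph is the set of vertices incident
with its edges, so inclusion of subgraphs is inclusion of edge sets).\<close>
definition leaf_path_unions :: "nat set \<Rightarrow> nat \<Rightarrow> (nat \<Rightarrow> nat set) \<Rightarrow> nat set set" where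
  "leaf_path_unions V k E = {S. \<exists>Ps. (\<forall>p\<in>Ps. leaf_path V k E p) \<and>
      (\<forall>p\<in>Ps. \<forall>q\<in>Ps. p \<noteq> q \<longrightarrow> set p \<inter> set q = {}) \<and>
      S = (\<Union>p\<in>Ps. path_edges k E p)}"

definition maximal_unions :: "nat set \<Rightarrow> nat \<Rightarrow> (nat \<Rightarrow> nat set) \<Rightarrow> nat set set" where
  "maximal_unions V k E = {S \<in> leaf_path_unions V k E.
      \<not> (\<exists>S'\<in>leaf_path_unions V k E. S \<subset> S')}"

definition fT :: "nat set \<Rightarrow> nat \<Rightarrow> (nat \<Rightarrow> nat set) \<Rightarrow> (nat \<Rightarrow> real) \<Rightarrow> (nat \<Rightarrow> real) \<Rightarrow> real" where
  "fT V k E b x = Max ((\<lambda>S. \<Sum>i\<in>S. b i * x i) ` maximal_unions V k E)"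

definition ET :: "nat set \<Rightarrow> nat \<Rightarrow> (nat \<Rightarrow> nat set) \<Rightarrow> (nat \<Rightarrow> real) \<Rightarrow> ennreal" where
  "ET V k E b = (\<integral>\<^sup>+ x. indicator {x. \<forall>i<k. 0 \<le> x i} x *
       ennreal (fT V k E b x * exp (- (\<Sum>i<k. x i))) \<partial>(PiM {..<k} (\<lambda>_. lborel)))"

definition admissible :: "nat \<Rightarrow> real \<Rightarrow> bool" where
  "admissible k c \<longleftrightarrow> 0 < c \<and>
     (\<exists>V E b. is_biased_tree V k E b \<and> ET V k E b < ennreal c)"

text \<open>The specific tree: v = 0, w = 1, leaves 2,3,4,5.\<close>
definition tree5_E :: "nat \<Rightarrow> nat set" where
  "tree5_E i = (if i = 0 then {0,2} else if i = 1 then {0,3} else if i = 2 then {0,1}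
                else if i = 3 then {1,4} else {1,5})"

definition tree5_b :: "real \<Rightarrow> nat \<Rightarrow> real" where
  "tree5_b \<beta> i = (if i = 2 then 1 - 4 * \<beta> else \<beta>)"

end

theory Submission
  imports Defs "HOL-Probability.Distributions" "HOL-Real_Asymp.Real_Asymp"
begin

(* The tree T has internal vertices v = 0 and w = 1 joined by the central edge 2; the leaf edges
   0, 1 hang at v and 3, 4 at w.  With leaf bias b and central bias k = 1 - 4b the argument is:

   1. Combinatorics.  The maximal unions of disjoint leaf-to-leaf paths are the two side paths
      {0,1,3,4} and the four paths through the centre {i,2,j} with i in {0,1}, j in {3,4}.
      Hence f_T(x) = b (max x0 x1 + max x3 x4) + max (b (min x0 x1 + min x3 x4)) (k x2).
   2. Analysis.  E_T is the expectation of f_T over five independent standard exponential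
      variables.  By Tonelli it is an iterated integral; the central coordinate contributes
      L + A + k e^{-A/k} (A the competing sum), which factors as a product of
      exp(-(b/k) min x0 x1) and exp(-(b/k) min x3 x4); each side pair then contributes
      2/(2 + b/k).  Altogether E_T = 4b + k (2/(2 + b/k))^2.
   3. Numerics.  This equals 4(1-3b)(5b^2-5b+1)/(7b-2)^2; the root b of the cubic lies in
      (0.172, 0.1722) by Taylor expansions at rational points, and on that interval the value
      lies in (0.8797, 0.8798). *)

section \<open>Paths in a graph given by an edge list\<close>

lemma tpath_single: "tpath k E [a]"
  by (simp add: tpath_def)

lemma tpath_Cons_Cons: "tpath k E (a # b # rest) \<longleftrightarrow>
   (\<exists>i<k. E i = {a, b}) \<and> a \<notin> set (b # rest) \<and> tpath k E (b # rest)"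
proof
  assume path: "tpath k E (a # b # rest)"
  show "(\<exists>i<k. E i = {a, b}) \<and> a \<notin> set (b # rest) \<and> tpath k E (b # rest)"
  proof (intro conjI)
    show "\<exists>i<k. E i = {a, b}" using path unfolding tpath_def by (metis Suc_less_eq length_Cons nth_Cons_0 nth_Cons_Suc zero_less_Suc)
    show "a \<notin> set (b # rest)" using path unfolding tpath_def by simp
    show "tpath k E (b # rest)" using path unfolding tpath_def
      by (auto, metis Suc_less_eq length_Cons nth_Cons_Suc)
  qed
next
  assume step: "(\<exists>i<k. E i = {a, b}) \<and> a \<notin> set (b # rest) \<and> tpath k E (b # rest)"
  show "tpath k E (a # b # rest)" unfolding tpath_def
  proof (intro conjI allI impI)
    show "distinct (a # b # rest)" using step unfolding tpath_def by auto
    fix j assume j: "Suc j < length (a # b # rest)"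
    show "\<exists>i<k. E i = {(a # b # rest) ! j, (a # b # rest) ! Suc j}"
    proof (cases j)
      case 0 then show ?thesis using step by simp
    next
      case (Suc j') then show ?thesis using step j unfolding tpath_def by simp
    qed
  qed simp
qed

lemma path_edges_single: "path_edges k E [a] = {}"
  by (simp add: path_edges_def)

lemma path_edges_Cons_Cons: "path_edges k E (a # b # rest) =
   {i. i < k \<and> E i = {a, b}} \<union> path_edges k E (b # rest)"
proof (intro set_eqI iffI)
  fix i assume "i \<in> path_edges k E (a # b # rest)"
  then obtain j where i: "i < k" and j: "Suc j < length (a # b # rest)" and e: "E i = {(a # b # rest) ! j, (a # b # rest) ! Suc j}"
    unfolding path_edges_def by blast
  show "i \<in> {i. i < k \<and> E i = {a, b}} \<union> path_edges k E (b # rest)"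
  proof (cases j)
    case 0 then show ?thesis using i e by simp
  next
    case (Suc j')
    have "Suc j' < length (b # rest)" using j Suc by simp
    moreover have "E i = {(b # rest) ! j', (b # rest) ! Suc j'}" using e Suc by simp
    ultimately have "i \<in> path_edges k E (b # rest)" unfolding path_edges_def using i by blast
    then show ?thesis by blast
  qed
next
  fix i assume "i \<in> {i. i < k \<and> E i = {a, b}} \<union> path_edges k E (b # rest)"
  then show "i \<in> path_edges k E (a # b # rest)"
  proof
    assume first: "i \<in> {i. i < k \<and> E i = {a, b}}"
    have "Suc 0 < length (a # b # rest)" by simp
    moreover have "E i = {(a # b # rest) ! 0, (a # b # rest) ! Suc 0}" using first by simp
    ultimately show ?thesis unfolding path_edges_def using first by blast
  next
    assume "i \<in> path_edges k E (b # rest)"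
    then obtain j where "i < k" "Suc j < length (b # rest)" "E i = {(b # rest) ! j, (b # rest) ! Suc j}"
      unfolding path_edges_def by blast
    moreover have "Suc (Suc j) < length (a # b # rest)" using calculation by simp
    moreover have "E i = {(a # b # rest) ! Suc j, (a # b # rest) ! Suc (Suc j)}" using calculation by simp
    ultimately show ?thesis unfolding path_edges_def by blast
  qed
qed

lemma path_edge_subset:
  assumes "i \<in> path_edges k E p"
  shows "E i \<subseteq> set p"
  using assms unfolding path_edges_def by auto

text \<open>A path passes through each of its vertices at most once, so it uses at most two of the
  edges at any vertex.\<close>

lemma path_no_three_edges_at_vertex:
  assumes p: "distinct p"
    and edges: "i1 \<in> path_edges k E p" "i2 \<in> path_edges k E p" "i3 \<in> path_edges k E p"
    and v: "v \<in> E i1" "v \<in> E i2" "v \<in> E i3"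
    and different: "E i1 \<noteq> E i2" "E i1 \<noteq> E i3" "E i2 \<noteq> E i3"
  shows False
proof -
  have position: "\<exists>j t. Suc j < length p \<and> E i = {p ! j, p ! Suc j} \<and> (t = j \<or> t = Suc j) \<and> p ! t = v"
    if "i \<in> path_edges k E p" "v \<in> E i" for i
  proof -
    from that(1) obtain j where "Suc j < length p" "E i = {p ! j, p ! Suc j}"
      unfolding path_edges_def by blast
    with that(2) have "p ! j = v \<or> p ! Suc j = v" by auto
    then show ?thesis using \<open>Suc j < length p\<close> \<open>E i = {p ! j, p ! Suc j}\<close> by blast
  qed
  obtain j1 t1 where j1: "Suc j1 < length p" "E i1 = {p ! j1, p ! Suc j1}" "t1 = j1 \<or> t1 = Suc j1" "p ! t1 = v"
    using position[OF edges(1) v(1)] by blast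
  obtain j2 t2 where j2: "Suc j2 < length p" "E i2 = {p ! j2, p ! Suc j2}" "t2 = j2 \<or> t2 = Suc j2" "p ! t2 = v"
    using position[OF edges(2) v(2)] by blast
  obtain j3 t3 where j3: "Suc j3 < length p" "E i3 = {p ! j3, p ! Suc j3}" "t3 = j3 \<or> t3 = Suc j3" "p ! t3 = v"
    using position[OF edges(3) v(3)] by blast
  have t: "t1 < length p" "t2 < length p" "t3 < length p"
    using j1(1,3) j2(1,3) j3(1,3) by auto
  have "t1 = t2" using nth_eq_iff_index_eq[OF p t(1,2)] j1(4) j2(4) by simp
  moreover have "t1 = t3" using nth_eq_iff_index_eq[OF p t(1,3)] j1(4) j3(4) by simp
  ultimately have "j1 = j2 \<or> j1 = j3 \<or> j2 = j3"
    using j1(3) j2(3) j3(3) by presburger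
  then show False using j1(2) j2(2) j3(2) different by metis
qed

section \<open>The tree with two internal vertices\<close>

lemma less_5_cases: "(i::nat) < 5 \<longleftrightarrow> i = 0 \<or> i = 1 \<or> i = 2 \<or> i = 3 \<or> i = 4"
  by auto

lemma ex_less_5: "(\<exists>i<(5::nat). P i) \<longleftrightarrow> P 0 \<or> P 1 \<or> P 2 \<or> P 3 \<or> P 4"
  by (auto simp: less_5_cases)

lemma tree5_degree:
  "tdeg 5 tree5_E v = (if v = 0 \<or> v = 1 then 3 else if v \<in> {2, 3, 4, 5} then 1 else 0)"
proof -
  have "{i. i < 5 \<and> v \<in> tree5_E i} =
      (if v = 0 then {0, 1, 2} else if v = 1 then {2, 3, 4} else if v = 2 then {0} else if v = 3 then {1}
       else if v = 4 then {3} else if v = 5 then {4} else {})"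
    by (auto simp: less_5_cases tree5_E_def)
  then show ?thesis unfolding tdeg_def by auto
qed

lemma tree5_leaf: "is_leaf {0..5} 5 tree5_E v \<longleftrightarrow> v \<in> {2, 3, 4, 5}"
  unfolding is_leaf_def tree5_degree by auto

definition tree5_route :: "nat list list list" where
  "tree5_route =
    [[[0], [0,1], [0,2], [0,3], [0,1,4], [0,1,5]],
     [[1,0], [1], [1,0,2], [1,0,3], [1,4], [1,5]],
     [[2,0], [2,0,1], [2], [2,0,3], [2,0,1,4], [2,0,1,5]],
     [[3,0], [3,0,1], [3,0,2], [3], [3,0,1,4], [3,0,1,5]],
     [[4,1,0], [4,1], [4,1,0,2], [4,1,0,3], [4], [4,1,5]],
     [[5,1,0], [5,1], [5,1,0,2], [5,1,0,3], [5,1,4], [5]]]"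

lemma tree5_route_path:
  assumes "u \<in> {0..5::nat}" "v \<in> {0..5::nat}"
  shows "tpath 5 tree5_E (tree5_route ! u ! v) \<and> hd (tree5_route ! u ! v) = u \<and> last (tree5_route ! u ! v) = v"
proof -
  have "u = 0 \<or> u = 1 \<or> u = 2 \<or> u = 3 \<or> u = 4 \<or> u = 5" "v = 0 \<or> v = 1 \<or> v = 2 \<or> v = 3 \<or> v = 4 \<or> v = 5"
    using assms by auto
  then show ?thesis
    by (elim disjE)
      (simp_all add: tree5_route_def tpath_Cons_Cons tpath_single ex_less_5 tree5_E_def doubleton_eq_iff)
qed

lemma tree5_is_tree: "is_tree {0..5} 5 tree5_E"
  unfolding is_tree_def
proof (intro conjI)
  show "\<forall>i<5. tree5_E i \<subseteq> {0..5} \<and> card (tree5_E i) = 2"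
    by (auto simp: less_5_cases tree5_E_def)
  show "inj_on tree5_E {..<5}"
    unfolding inj_on_def by (auto simp: less_5_cases tree5_E_def doubleton_eq_iff)
  show "\<forall>u\<in>{0..5}. \<forall>v\<in>{0..5}. \<exists>ps. tpath 5 tree5_E ps \<and> hd ps = u \<and> last ps = v"
    using tree5_route_path by blast
qed simp_all

lemma tree5_biased:
  assumes "0 \<le> b" "b \<le> 1/4"
  shows "is_biased_tree {0..5} 5 tree5_E (tree5_b b)"
  unfolding is_biased_tree_def
proof (intro conjI)
  show "\<forall>v\<in>{0..5}. \<not> is_leaf {0..5} 5 tree5_E v \<longrightarrow> tdeg 5 tree5_E v = 3"
    by (auto simp: tree5_leaf tree5_degree)
  show "\<forall>i<5. 0 \<le> tree5_b b i" using assms by (auto simp: tree5_b_def)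
  show "(\<Sum>i<5. tree5_b b i) = 1" by (simp add: tree5_b_def numeral_eq_Suc)
qed (rule tree5_is_tree)

text \<open>A union of disjoint leaf paths uses edges 0..4 only, and if it contains the central edge 2
  it is a single path through both internal vertices, hence uses exactly one edge on each side.\<close>

lemma tree5_union_shape:
  assumes "S \<in> leaf_path_unions {0..5} 5 tree5_E"
  shows "S \<subseteq> {0, 1, 2, 3, 4} \<and> (2 \<in> S \<longrightarrow> \<not> {0, 1} \<subseteq> S \<and> \<not> {3, 4} \<subseteq> S)"
proof -
  from assms obtain Ps where leaf: "\<forall>p\<in>Ps. leaf_path {0..5} 5 tree5_E p"
    and disjoint: "\<forall>p\<in>Ps. \<forall>q\<in>Ps. p \<noteq> q \<longrightarrow> set p \<inter> set q = {}"
    and S: "S = (\<Union>p\<in>Ps. path_edges 5 tree5_E p)"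
    unfolding leaf_path_unions_def by blast
  have "S \<subseteq> {0, 1, 2, 3, 4}" unfolding S path_edges_def by (auto simp: less_5_cases)
  moreover have "\<not> {0, 1} \<subseteq> S \<and> \<not> {3, 4} \<subseteq> S" if "2 \<in> S"
  proof -
    from that obtain p where p: "p \<in> Ps" "2 \<in> path_edges 5 tree5_E p" unfolding S by blast
    have "tree5_E 2 \<subseteq> set p" by (rule path_edge_subset[OF p(2)])
    then have centre: "0 \<in> set p" "1 \<in> set p" by (auto simp: tree5_E_def)
    have "path_edges 5 tree5_E q = {}" if q: "q \<in> Ps" "q \<noteq> p" for q
    proof (rule ccontr)
      assume "path_edges 5 tree5_E q \<noteq> {}"
      then obtain i where i: "i \<in> path_edges 5 tree5_E q" by blast
      then have "0 \<in> tree5_E i \<or> 1 \<in> tree5_E i"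
        unfolding path_edges_def by (auto simp: less_5_cases tree5_E_def)
      then show False
        using path_edge_subset[OF i] disjoint p(1) q centre by blast
    qed
    then have S_p: "S = path_edges 5 tree5_E p" unfolding S using p(1) by auto
    have "distinct p" using leaf p(1) unfolding leaf_path_def tpath_def by blast
    from path_no_three_edges_at_vertex[OF this, of 0 5 tree5_E 1 2] path_no_three_edges_at_vertex[OF this, of 3 5 tree5_E 4 2]
    show ?thesis using p(2) unfolding S_p by (auto simp: tree5_E_def doubleton_eq_iff)
  qed
  ultimately show ?thesis by blast
qed

lemma tree5_leaf_paths:
  "leaf_path {0..5} 5 tree5_E [2,0,3]" "leaf_path {0..5} 5 tree5_E [4,1,5]"
  "leaf_path {0..5} 5 tree5_E [2,0,1,4]" "leaf_path {0..5} 5 tree5_E [2,0,1,5]"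
  "leaf_path {0..5} 5 tree5_E [3,0,1,4]" "leaf_path {0..5} 5 tree5_E [3,0,1,5]"
  by (simp_all add: leaf_path_def tpath_Cons_Cons tpath_single ex_less_5 tree5_E_def doubleton_eq_iff
      tree5_leaf)

lemma tree5_path_edges:
  "path_edges 5 tree5_E [2,0,3] = {0,1}" "path_edges 5 tree5_E [4,1,5] = {3,4}"
  "path_edges 5 tree5_E [2,0,1,4] = {0,2,3}" "path_edges 5 tree5_E [2,0,1,5] = {0,2,4}"
  "path_edges 5 tree5_E [3,0,1,4] = {1,2,3}" "path_edges 5 tree5_E [3,0,1,5] = {1,2,4}"
  by (auto simp: path_edges_Cons_Cons path_edges_single less_5_cases tree5_E_def doubleton_eq_iff)

text \<open>The maximal unions: the two side paths together, or one path through the centre.\<close>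

definition tree5_maximal :: "nat set set" where
  "tree5_maximal = {{0,1,3,4}, {0,2,3}, {0,2,4}, {1,2,3}, {1,2,4}}"

lemma tree5_maximal_are_unions: "tree5_maximal \<subseteq> leaf_path_unions {0..5} 5 tree5_E"
proof -
  have single: "path_edges 5 tree5_E p \<in> leaf_path_unions {0..5} 5 tree5_E"
    if "leaf_path {0..5} 5 tree5_E p" for p
    unfolding leaf_path_unions_def using that by (intro CollectI exI[of _ "{p}"]) auto
  have pair: "{0,1,3,4} \<in> leaf_path_unions {0..5} 5 tree5_E"
    unfolding leaf_path_unions_def
  proof (intro CollectI exI[of _ "{[2,0,3], [4,1,5]}"] conjI)
    show "\<forall>p\<in>{[2,0,3], [4,1,5]}. leaf_path {0..5} 5 tree5_E p"
      using tree5_leaf_paths(1,2) by blast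
    show "{0,1,3,4} = (\<Union>p\<in>{[2,0,3], [4,1,5]}. path_edges 5 tree5_E p)"
      using tree5_path_edges(1,2) by auto
  qed auto
  show ?thesis
    unfolding tree5_maximal_def
    using pair single[OF tree5_leaf_paths(3)] single[OF tree5_leaf_paths(4)]
      single[OF tree5_leaf_paths(5)] single[OF tree5_leaf_paths(6)]
    by (simp only: tree5_path_edges insert_subset empty_subsetI simp_thms)
qed

text \<open>Every union of disjoint leaf paths lies below one of these five sets; since they are
  themselves such unions and pairwise incomparable, they are exactly the maximal ones.\<close>

lemma tree5_union_below_maximal:
  assumes "S \<in> leaf_path_unions {0..5} 5 tree5_E"
  shows "\<exists>A\<in>tree5_maximal. S \<subseteq> A"
proof -
  have S: "S \<subseteq> {0, 1, 2, 3, 4}" and centre: "2 \<in> S \<Longrightarrow> \<not> {0, 1} \<subseteq> S \<and> \<not> {3, 4} \<subseteq> S"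
    using tree5_union_shape[OF assms] by auto
  have below: "\<exists>A\<in>tree5_maximal. S \<subseteq> A" if "A \<in> tree5_maximal" "S \<subseteq> A" for A
    using that by blast
  show ?thesis
  proof (cases "2 \<in> S")
    case False
    then have "S \<subseteq> {0,1,3,4}" using S by auto
    then show ?thesis by (rule below[rotated]) (simp add: tree5_maximal_def)
  next
    case True
    then have "0 \<notin> S \<or> 1 \<notin> S" "3 \<notin> S \<or> 4 \<notin> S" using centre by auto
    then consider "0 \<notin> S" "3 \<notin> S" | "0 \<notin> S" "4 \<notin> S" | "1 \<notin> S" "3 \<notin> S" | "1 \<notin> S" "4 \<notin> S"
      by blast
    then show ?thesis
    proof cases
      case 1
      then have "S \<subseteq> {1,2,4}" using S by auto
      then show ?thesis by (rule below[rotated]) (simp add: tree5_maximal_def)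
    next
      case 2
      then have "S \<subseteq> {1,2,3}" using S by auto
      then show ?thesis by (rule below[rotated]) (simp add: tree5_maximal_def)
    next
      case 3
      then have "S \<subseteq> {0,2,4}" using S by auto
      then show ?thesis by (rule below[rotated]) (simp add: tree5_maximal_def)
    next
      case 4
      then have "S \<subseteq> {0,2,3}" using S by auto
      then show ?thesis by (rule below[rotated]) (simp add: tree5_maximal_def)
    qed
  qed
qed

lemma tree5_maximal_unions: "maximal_unions {0..5} 5 tree5_E = tree5_maximal"
proof (intro set_eqI iffI)
  fix S assume "S \<in> maximal_unions {0..5} 5 tree5_E"
  then have S: "S \<in> leaf_path_unions {0..5} 5 tree5_E"
    and maximal: "\<not> (\<exists>S'\<in>leaf_path_unions {0..5} 5 tree5_E. S \<subset> S')"
    unfolding maximal_unions_def by auto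
  obtain A where A: "A \<in> tree5_maximal" "S \<subseteq> A"
    using tree5_union_below_maximal[OF S] by blast
  then have "S = A" using maximal tree5_maximal_are_unions by blast
  with A show "S \<in> tree5_maximal" by simp
next
  fix S assume S: "S \<in> tree5_maximal"
  have "\<not> S \<subset> S'" if S': "S' \<in> leaf_path_unions {0..5} 5 tree5_E" for S'
  proof
    assume "S \<subset> S'"
    moreover obtain A where "A \<in> tree5_maximal" "S' \<subseteq> A"
      using tree5_union_below_maximal[OF S'] by blast
    ultimately have "S \<subset> A" by blast
    moreover have "S = {0,1,3,4} \<or> S = {0,2,3} \<or> S = {0,2,4} \<or> S = {1,2,3} \<or> S = {1,2,4}"
      using S unfolding tree5_maximal_def by (simp only: insert_iff empty_iff simp_thms)
    moreover have "A = {0,1,3,4} \<or> A = {0,2,3} \<or> A = {0,2,4} \<or> A = {1,2,3} \<or> A = {1,2,4}"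
      using \<open>A \<in> tree5_maximal\<close> unfolding tree5_maximal_def by (simp only: insert_iff empty_iff simp_thms)
    ultimately show False by (elim disjE) (simp_all add: psubset_eq)
  qed
  then show "S \<in> maximal_unions {0..5} 5 tree5_E"
    unfolding maximal_unions_def using S tree5_maximal_are_unions by blast
qed

text \<open>Consequently f_T is the maximum of five linear forms, which takes the following closed
  form: the two leaf edges on each side contribute their larger value, and the two smaller
  values compete with the central edge.\<close>

lemma max_of_five_forms:
  fixes \<beta> c x0 x1 x2 x3 x4 :: real
  assumes \<beta>: "0 \<le> \<beta>"
  shows "max (\<beta> * x0 + \<beta> * x1 + \<beta> * x3 + \<beta> * x4) (max (\<beta> * x0 + c * x2 + \<beta> * x3)
           (max (\<beta> * x0 + c * x2 + \<beta> * x4) (max (\<beta> * x1 + c * x2 + \<beta> * x3) (\<beta> * x1 + c * x2 + \<beta> * x4))))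
       = \<beta> * (max x0 x1 + max x3 x4) + max (\<beta> * (min x0 x1 + min x3 x4)) (c * x2)"
proof -
  have mono: "\<beta> * u \<le> \<beta> * u'" if "u \<le> u'" for u u' using mult_left_mono[OF that \<beta>] .
  show ?thesis
  proof (cases "x0 \<le> x1"; cases "x3 \<le> x4")
    assume "x0 \<le> x1" "x3 \<le> x4"
    then show ?thesis using mono[of x0 x1] mono[of x3 x4] by (simp add: max_def min_def algebra_simps)
  next
    assume "x0 \<le> x1" "\<not> x3 \<le> x4"
    then show ?thesis using mono[of x0 x1] mono[of x4 x3] by (simp add: max_def min_def algebra_simps)
  next
    assume "\<not> x0 \<le> x1" "x3 \<le> x4"
    then show ?thesis using mono[of x1 x0] mono[of x3 x4] by (simp add: max_def min_def algebra_simps)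
  next
    assume "\<not> x0 \<le> x1" "\<not> x3 \<le> x4"
    then show ?thesis using mono[of x1 x0] mono[of x4 x3] by (simp add: max_def min_def algebra_simps)
  qed
qed

lemma tree5_fT:
  fixes \<beta> :: real
  assumes "0 \<le> \<beta>"
  shows "fT {0..5} 5 tree5_E (tree5_b \<beta>) x =
    \<beta> * (max (x 0) (x 1) + max (x 3) (x 4)) + max (\<beta> * (min (x 0) (x 1) + min (x 3) (x 4))) ((1 - 4 * \<beta>) * x 2)"
proof -
  have "fT {0..5} 5 tree5_E (tree5_b \<beta>) x =
     max (\<beta> * x 0 + \<beta> * x 1 + \<beta> * x 3 + \<beta> * x 4) (max (\<beta> * x 0 + (1 - 4 * \<beta>) * x 2 + \<beta> * x 3)
       (max (\<beta> * x 0 + (1 - 4 * \<beta>) * x 2 + \<beta> * x 4)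
         (max (\<beta> * x 1 + (1 - 4 * \<beta>) * x 2 + \<beta> * x 3) (\<beta> * x 1 + (1 - 4 * \<beta>) * x 2 + \<beta> * x 4))))"
    unfolding fT_def tree5_maximal_unions tree5_maximal_def by (simp add: tree5_b_def add.assoc)
  also have "\<dots> = \<beta> * (max (x 0) (x 1) + max (x 3) (x 4))
      + max (\<beta> * (min (x 0) (x 1) + min (x 3) (x 4))) ((1 - 4 * \<beta>) * x 2)"
    by (rule max_of_five_forms[OF assms])
  finally show ?thesis .
qed

section \<open>Integrals against the standard exponential density\<close>

text \<open>The weight e^{-y} on [0,\<infinity>).  Every coordinate of the integral E_T carries this
  weight, so E_T is an expectation over independent standard exponential variables.\<close>

definition exp_weight :: "real \<Rightarrow> ennreal" where
  "exp_weight y = ennreal (exp (- y)) * indicator {0..} y"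

lemma exp_weight_measurable [measurable]: "exp_weight \<in> borel_measurable borel"
  unfolding exp_weight_def by measurable

lemma exp_weight_eq_0_iff: "exp_weight y = 0 \<longleftrightarrow> y < 0"
  by (auto simp: exp_weight_def indicator_def)

text \<open>Conversion to the form used by the fundamental theorem of calculus in the library.\<close>

lemma exp_weight_times:
  "exp_weight y * ennreal (F y) = ennreal (F y * exp (- y)) * indicator {0..} y"
  by (simp add: exp_weight_def indicator_def ennreal_mult'' mult.commute)

lemma nn_integral_exp_weight_cong:
  assumes "\<And>y. 0 \<le> y \<Longrightarrow> f y = g y"
  shows "(\<integral>\<^sup>+y. exp_weight y * f y \<partial>lborel) = (\<integral>\<^sup>+y. exp_weight y * g y \<partial>lborel)"
  by (rule nn_integral_cong) (use assms in \<open>auto simp: exp_weight_def indicator_def\<close>)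

lemma nn_integral_exp_tail:
  fixes p a :: real
  assumes p: "0 < p"
  shows "(\<integral>\<^sup>+y. ennreal (exp (- (p * y))) * indicator {a..} y \<partial>lborel) = ennreal (exp (- (p * a)) / p)"
proof -
  have "(\<integral>\<^sup>+y. ennreal (exp (- (p * y))) * indicator {a..} y \<partial>lborel)
      = ennreal (0 - (- exp (- (p * a)) / p))"
  proof (rule nn_integral_FTC_atLeast)
    show "((\<lambda>y. - exp (- (p * y)) / p) has_real_derivative exp (- (p * x))) (at x)" for x
      using p by (auto intro!: derivative_eq_intros simp: field_simps)
    show "((\<lambda>y. - exp (- (p * y)) / p) \<longlongrightarrow> 0) at_top"
      using p by real_asymp
  qed auto
  then show ?thesis by simp
qed

lemma nn_integral_exp_Icc:
  fixes p a :: real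
  assumes p: "0 < p" and a: "0 \<le> a"
  shows "(\<integral>\<^sup>+y. ennreal (exp (- (p * y))) * indicator {0..a} y \<partial>lborel)
       = ennreal ((1 - exp (- (p * a))) / p)"
proof -
  have "(\<integral>\<^sup>+y. ennreal (exp (- (p * y))) * indicator {0..a} y \<partial>lborel)
      = ennreal (- exp (- (p * a)) / p - - exp (- (p * 0)) / p)"
  proof (rule nn_integral_FTC_Icc)
    show "((\<lambda>y. - exp (- (p * y)) / p) has_real_derivative exp (- (p * x))) (at x)" for x
      using p by (auto intro!: derivative_eq_intros simp: field_simps)
  qed (use a in auto)
  then show ?thesis by (simp add: diff_divide_distrib)
qed

lemma tendsto_exp_neg_at_top: "0 < p \<Longrightarrow> ((\<lambda>y. exp (- (p * y :: real))) \<longlongrightarrow> 0) at_top"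
  by real_asymp

lemma exp_weight_total: "(\<integral>\<^sup>+y. exp_weight y \<partial>lborel) = 1"
  using nn_integral_exp_tail[of 1 0] by (simp add: exp_weight_def)

lemma exp_weight_first_moment: "(\<integral>\<^sup>+y. exp_weight y * ennreal y \<partial>lborel) = 1"
proof -
  have "(\<integral>\<^sup>+y. exp_weight y * ennreal y \<partial>lborel)
      = (\<integral>\<^sup>+y. ennreal (y ^ 1 * exp (- y)) * indicator {0..} y \<partial>lborel)"
    using exp_weight_times[of _ "\<lambda>y. y"] by simp
  then show ?thesis using nn_intergal_power_times_exp_Ici[of 1] by simp
qed

text \<open>Linearity: the mean of \<alpha> + \<beta> y + \<gamma> Q(y) is \<alpha> + \<beta> + \<gamma> times the mean of Q.
  This is how all but one of the five coordinates are integrated out.\<close>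

lemma exp_mean_affine:
  fixes \<alpha> \<beta> \<gamma> I V :: real and Q F :: "real \<Rightarrow> real"
  assumes coeffs: "0 \<le> \<alpha>" "0 \<le> \<beta>" "0 \<le> \<gamma>" "0 \<le> I"
    and Q_meas: "Q \<in> borel_measurable borel" and Q_nonneg: "\<And>y. 0 \<le> y \<Longrightarrow> 0 \<le> Q y"
    and Q_mean: "(\<integral>\<^sup>+y. exp_weight y * ennreal (Q y) \<partial>lborel) = ennreal I"
    and F: "\<And>y. 0 \<le> y \<Longrightarrow> F y = \<alpha> + \<beta> * y + \<gamma> * Q y"
    and V: "V = \<alpha> + \<beta> + \<gamma> * I"
  shows "(\<integral>\<^sup>+y. exp_weight y * ennreal (F y) \<partial>lborel) = ennreal V"
proof -
  have pointwise: "exp_weight y * ennreal (F y) = ennreal \<alpha> * exp_weight y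
      + (ennreal \<beta> * (exp_weight y * ennreal y) + ennreal \<gamma> * (exp_weight y * ennreal (Q y)))" for y
  proof (cases "0 \<le> y")
    case True
    then have "ennreal (F y) = ennreal \<alpha> + (ennreal \<beta> * ennreal y + ennreal \<gamma> * ennreal (Q y))"
      using F coeffs Q_nonneg[OF True]
      by (simp add: ennreal_plus[symmetric] ennreal_mult[symmetric] del: ennreal_plus)
    then show ?thesis by (simp add: distrib_left ac_simps)
  qed (simp add: exp_weight_def)
  have "(\<integral>\<^sup>+y. exp_weight y * ennreal (F y) \<partial>lborel)
      = (\<integral>\<^sup>+y. ennreal \<alpha> * exp_weight y + (ennreal \<beta> * (exp_weight y * ennreal y)
          + ennreal \<gamma> * (exp_weight y * ennreal (Q y))) \<partial>lborel)"
    by (simp only: pointwise)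
  also have "\<dots> = ennreal \<alpha> * (\<integral>\<^sup>+y. exp_weight y \<partial>lborel)
      + (ennreal \<beta> * (\<integral>\<^sup>+y. exp_weight y * ennreal y \<partial>lborel)
      + ennreal \<gamma> * (\<integral>\<^sup>+y. exp_weight y * ennreal (Q y) \<partial>lborel))"
    using Q_meas by (simp add: nn_integral_add nn_integral_cmult)
  also have "\<dots> = ennreal V"
    using coeffs by (simp add: exp_weight_total exp_weight_first_moment Q_mean V
        ennreal_plus[symmetric] ennreal_mult[symmetric] del: ennreal_plus)
  finally show ?thesis .
qed

text \<open>The mean of L + max(A, k y): the part above A contributes k e^{-A/k}.  This integrates
  out the central edge.\<close>

lemma nn_integral_linear_tail:
  fixes k A :: real
  assumes k: "0 < k"
  shows "(\<integral>\<^sup>+y. ennreal ((k * y - A) * exp (- y)) * indicator {A / k..} y \<partial>lborel)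
       = ennreal (k * exp (- (A / k)))"
proof -
  have "(\<integral>\<^sup>+y. ennreal ((k * y - A) * exp (- y)) * indicator {A / k..} y \<partial>lborel)
      = ennreal (0 - (- (k * (A / k) - A + k) * exp (- (A / k))))"
  proof (rule nn_integral_FTC_atLeast)
    show "((\<lambda>y. - (k * y - A + k) * exp (- y)) has_real_derivative (k * x - A) * exp (- x)) (at x)" for x
      by (auto intro!: derivative_eq_intros simp: field_simps)
    show "0 \<le> (k * x - A) * exp (- x)" if "A / k \<le> x" for x
      using that k by (simp add: field_simps)
    show "((\<lambda>y. - (k * y - A + k) * exp (- y)) \<longlongrightarrow> 0) at_top"
      by real_asymp
  qed auto
  then show ?thesis using k by simp
qed

lemma exp_mean_max:
  fixes k A L :: real
  assumes k: "0 < k" and A: "0 \<le> A" and L: "0 \<le> L"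
  shows "(\<integral>\<^sup>+y. exp_weight y * ennreal (L + max A (k * y)) \<partial>lborel)
       = ennreal (L + A + k * exp (- (A / k)))"
proof -
  have pointwise: "exp_weight y * ennreal (L + max A (k * y))
      = ennreal (L + A) * exp_weight y + ennreal ((k * y - A) * exp (- y)) * indicator {A / k..} y" for y
  proof (cases "A / k \<le> y")
    case True
    have ky: "A \<le> k * y" using True k by (simp add: field_simps)
    have "0 \<le> A / k" using A k by simp
    then have "0 \<le> y" using True by linarith
    have "ennreal (L + max A (k * y)) = ennreal (L + A) + ennreal (k * y - A)"
      using ky A L by (simp add: ennreal_plus[symmetric] del: ennreal_plus)
    then show ?thesis
      using True \<open>0 \<le> y\<close>
      by (simp add: exp_weight_def distrib_left ennreal_mult' mult.commute)
  next
    case False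
    then have "k * y < A" using k by (simp add: field_simps)
    then show ?thesis using False
      by (simp add: exp_weight_def max_def indicator_def ennreal_mult'' mult.commute)
  qed
  have "(\<integral>\<^sup>+y. exp_weight y * ennreal (L + max A (k * y)) \<partial>lborel)
      = ennreal (L + A) * (\<integral>\<^sup>+y. exp_weight y \<partial>lborel)
        + (\<integral>\<^sup>+y. ennreal ((k * y - A) * exp (- y)) * indicator {A / k..} y \<partial>lborel)"
    by (simp only: pointwise, subst nn_integral_add) (auto simp: nn_integral_cmult)
  also have "\<dots> = ennreal (L + A + k * exp (- (A / k)))"
    using A L k by (simp add: exp_weight_total nn_integral_linear_tail ennreal_plus[symmetric]
        del: ennreal_plus)
  finally show ?thesis .
qed

text \<open>The mean of exp(-\<delta> min(s, Y)) for a standard exponential Y, and its own mean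
  2/(2 + \<delta>), which is the mean of exp(-\<delta> min(X, Y)) for independent X, Y (indeed
  min(X, Y) is exponential with rate 2).\<close>

definition exp_min_mean :: "real \<Rightarrow> real \<Rightarrow> real" where
  "exp_min_mean \<delta> s = (1 + \<delta> * exp (- ((1 + \<delta>) * s))) / (1 + \<delta>)"

lemma exp_min_mean_nonneg: "0 \<le> \<delta> \<Longrightarrow> 0 \<le> s \<Longrightarrow> 0 \<le> exp_min_mean \<delta> s"
  unfolding exp_min_mean_def by (intro divide_nonneg_nonneg) auto

lemma exp_min_mean_measurable [measurable]: "exp_min_mean \<delta> \<in> borel_measurable borel"
  unfolding exp_min_mean_def by measurable

lemma exp_mean_exp_min:
  fixes \<delta> s :: real
  assumes \<delta>: "0 \<le> \<delta>" and s: "0 \<le> s"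
  shows "(\<integral>\<^sup>+y. exp_weight y * ennreal (exp (- (\<delta> * min s y))) \<partial>lborel) = ennreal (exp_min_mean \<delta> s)"
proof -
  have pointwise: "exp_weight y * ennreal (exp (- (\<delta> * min s y)))
      = ennreal (exp (- ((1 + \<delta>) * y))) * indicator {0..s} y
        + ennreal (exp (- (\<delta> * s))) * (ennreal (exp (- (1 * y))) * indicator {s<..} y)" for y
    using s by (auto simp: exp_weight_def indicator_def min_def ennreal_mult[symmetric] mult_exp_exp
        algebra_simps)
  have tail: "(\<integral>\<^sup>+y. ennreal (exp (- (1 * y))) * indicator {s<..} y \<partial>lborel)
      = (\<integral>\<^sup>+y. ennreal (exp (- (1 * y))) * indicator {s..} y \<partial>lborel)"
    by (rule nn_integral_cong_AE) (use AE_lborel_singleton[of s] in \<open>auto simp: indicator_def\<close>)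
  have "(\<integral>\<^sup>+y. exp_weight y * ennreal (exp (- (\<delta> * min s y))) \<partial>lborel)
      = (\<integral>\<^sup>+y. ennreal (exp (- ((1 + \<delta>) * y))) * indicator {0..s} y \<partial>lborel)
        + ennreal (exp (- (\<delta> * s))) * (\<integral>\<^sup>+y. ennreal (exp (- (1 * y))) * indicator {s<..} y \<partial>lborel)"
    by (simp only: pointwise, subst nn_integral_add) (auto simp: nn_integral_cmult)
  also have "\<dots> = ennreal ((1 - exp (- ((1 + \<delta>) * s))) / (1 + \<delta>))
        + ennreal (exp (- (\<delta> * s))) * ennreal (exp (- (1 * s)) / 1)"
    using \<delta> s by (simp only: tail nn_integral_exp_Icc nn_integral_exp_tail)
  also have "\<dots> = ennreal ((1 - exp (- ((1 + \<delta>) * s))) / (1 + \<delta>)) + ennreal (exp (- ((1 + \<delta>) * s)))"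
    by (simp add: ennreal_mult[symmetric] mult_exp_exp algebra_simps)
  also have "\<dots> = ennreal (exp_min_mean \<delta> s)"
  proof -
    have "(1 - exp (- ((1 + \<delta>) * s))) / (1 + \<delta>) + exp (- ((1 + \<delta>) * s)) = exp_min_mean \<delta> s"
      using \<delta> unfolding exp_min_mean_def by (simp add: field_simps)
    then show ?thesis
      using \<delta> s by (simp add: ennreal_plus[symmetric] divide_nonneg_nonneg del: ennreal_plus)
  qed
  finally show ?thesis .
qed

lemma exp_mean_exp_min_mean:
  fixes \<delta> :: real
  assumes \<delta>: "0 \<le> \<delta>"
  shows "(\<integral>\<^sup>+y. exp_weight y * ennreal (exp_min_mean \<delta> y) \<partial>lborel) = ennreal (2 / (2 + \<delta>))"
proof -
  define F where "F y = - exp (- y) / (1 + \<delta>) - \<delta> / ((1 + \<delta>) * (2 + \<delta>)) * exp (- ((2 + \<delta>) * y))"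
    for y
  have F_deriv: "(F has_real_derivative exp_min_mean \<delta> x * exp (- x)) (at x)" for x
  proof -
    have "(F has_real_derivative exp (- x) / (1 + \<delta>) + \<delta> / (1 + \<delta>) * exp (- ((2 + \<delta>) * x))) (at x)"
      unfolding F_def using \<delta>
      by (auto intro!: derivative_eq_intros simp: divide_simps) (simp add: algebra_simps)
    moreover have "exp (- x) / (1 + \<delta>) + \<delta> / (1 + \<delta>) * exp (- ((2 + \<delta>) * x))
        = exp_min_mean \<delta> x * exp (- x)"
    proof -
      have "exp (- ((2 + \<delta>) * x)) = exp (- ((1 + \<delta>) * x)) * exp (- x)"
        by (simp add: mult_exp_exp algebra_simps)
      then show ?thesis
        unfolding exp_min_mean_def by (simp add: add_divide_distrib algebra_simps)
    qed
    ultimately show ?thesis by simp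
  qed
  have "(\<integral>\<^sup>+y. ennreal (exp_min_mean \<delta> y * exp (- y)) * indicator {0..} y \<partial>lborel) = ennreal (0 - F 0)"
  proof (rule nn_integral_FTC_atLeast[OF _ F_deriv])
    show "0 \<le> exp_min_mean \<delta> x * exp (- x)" if "0 \<le> x" for x
      using exp_min_mean_nonneg[OF \<delta> that] by simp
    have "((\<lambda>y::real. exp (- y)) \<longlongrightarrow> 0) at_top"
      by real_asymp
    moreover have "((\<lambda>y. exp (- ((2 + \<delta>) * y))) \<longlongrightarrow> 0) at_top"
      using \<delta> by (intro tendsto_exp_neg_at_top) simp
    ultimately have "(F \<longlongrightarrow> - 0 / (1 + \<delta>) - \<delta> / ((1 + \<delta>) * (2 + \<delta>)) * 0) at_top"
      unfolding F_def using \<delta> by (intro tendsto_diff tendsto_divide tendsto_minus tendsto_mult tendsto_const) auto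
    then show "(F \<longlongrightarrow> 0) at_top" by simp
  qed measurable
  also have "0 - F 0 = 2 / (2 + \<delta>)"
    using \<delta> by (simp add: F_def divide_simps)
  finally show ?thesis by (simp add: exp_weight_times)
qed

text \<open>Integrating out a pair of leaf edges at the same internal vertex.\<close>

lemma exp_mean_pair:
  fixes \<alpha> \<beta> \<gamma> \<delta> V :: real and F :: "real \<Rightarrow> real \<Rightarrow> real"
  assumes coeffs: "0 \<le> \<alpha>" "0 \<le> \<beta>" "0 \<le> \<gamma>" "0 \<le> \<delta>"
    and F: "\<And>s t. 0 \<le> s \<Longrightarrow> 0 \<le> t \<Longrightarrow> F s t = \<alpha> + \<beta> * (s + t) + \<gamma> * exp (- (\<delta> * min s t))"
    and V: "V = \<alpha> + 2 * \<beta> + \<gamma> * (2 / (2 + \<delta>))"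
  shows "(\<integral>\<^sup>+s. exp_weight s * (\<integral>\<^sup>+t. exp_weight t * ennreal (F s t) \<partial>lborel) \<partial>lborel) = ennreal V"
proof -
  have inner: "(\<integral>\<^sup>+t. exp_weight t * ennreal (F s t) \<partial>lborel)
      = ennreal (\<alpha> + \<beta> + \<beta> * s + \<gamma> * exp_min_mean \<delta> s)" if s: "0 \<le> s" for s
    by (rule exp_mean_affine[where \<alpha>="\<alpha> + \<beta> * s" and \<beta>=\<beta> and \<gamma>=\<gamma> and Q="\<lambda>t. exp (- (\<delta> * min s t))"])
      (use coeffs s F in \<open>auto simp: exp_mean_exp_min exp_min_mean_nonneg algebra_simps\<close>)
  have "(\<integral>\<^sup>+s. exp_weight s * (\<integral>\<^sup>+t. exp_weight t * ennreal (F s t) \<partial>lborel) \<partial>lborel)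
      = (\<integral>\<^sup>+s. exp_weight s * ennreal (\<alpha> + \<beta> + \<beta> * s + \<gamma> * exp_min_mean \<delta> s) \<partial>lborel)"
    by (intro nn_integral_exp_weight_cong) (simp add: inner)
  also have "\<dots> = ennreal V"
    by (rule exp_mean_affine[where \<alpha>="\<alpha> + \<beta>" and \<beta>=\<beta> and \<gamma>=\<gamma> and Q="exp_min_mean \<delta>"])
      (use coeffs V in \<open>auto simp: exp_mean_exp_min_mean exp_min_mean_nonneg\<close>)
  finally show ?thesis .
qed

section \<open>Iterated integration over five coordinates\<close>

interpretation lborel_product: product_sigma_finite "\<lambda>_::nat. lborel :: real measure"
  by standard

lemma measurable_fun_upd_PiM:
  fixes F :: "(nat \<Rightarrow> real) \<Rightarrow> ennreal"
  assumes F: "F \<in> borel_measurable (PiM (insert i I) (\<lambda>_. lborel))" and i: "i \<notin> I"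
  shows "(\<lambda>x. F (x(i := y))) \<in> borel_measurable (PiM I (\<lambda>_. lborel))"
proof -
  have "(\<lambda>x. x(i := y)) \<in> measurable (PiM I (\<lambda>_. lborel)) (PiM (insert i I) (\<lambda>_. lborel :: real measure))"
    by (rule measurable_fun_upd[where J=I and f="\<lambda>x. x" and h="\<lambda>_. y", simplified]) auto
  from measurable_comp[OF this F] show ?thesis by (simp add: comp_def)
qed

lemma nn_integral_PiM_insert_weight:
  fixes g :: "real \<Rightarrow> ennreal" and F :: "(nat \<Rightarrow> real) \<Rightarrow> ennreal"
  assumes I: "finite I" "i \<notin> I"
    and g: "g \<in> borel_measurable borel" and F: "F \<in> borel_measurable (PiM (insert i I) (\<lambda>_. lborel))"
  shows "(\<integral>\<^sup>+x. g (x i) * F x \<partial>PiM (insert i I) (\<lambda>_. lborel))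
       = (\<integral>\<^sup>+y. g y * (\<integral>\<^sup>+x. F (x(i := y)) \<partial>PiM I (\<lambda>_. lborel)) \<partial>lborel)"
proof -
  have "(\<integral>\<^sup>+x. g (x i) * F x \<partial>PiM (insert i I) (\<lambda>_. lborel))
      = (\<integral>\<^sup>+y. \<integral>\<^sup>+x. g y * F (x(i := y)) \<partial>PiM I (\<lambda>_. lborel) \<partial>lborel)"
    using I g F by (subst lborel_product.product_nn_integral_insert_rev) auto
  also have "\<dots> = (\<integral>\<^sup>+y. g y * (\<integral>\<^sup>+x. F (x(i := y)) \<partial>PiM I (\<lambda>_. lborel)) \<partial>lborel)"
    using I F by (intro nn_integral_cong nn_integral_cmult measurable_fun_upd_PiM) auto
  finally show ?thesis .
qed

lemma nn_integral_PiM5_weighted: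
  fixes g :: "real \<Rightarrow> ennreal" and h :: "real \<Rightarrow> real \<Rightarrow> real \<Rightarrow> real \<Rightarrow> real \<Rightarrow> ennreal"
  assumes g: "g \<in> borel_measurable borel"
    and h: "(\<lambda>x. h (x 0) (x 1) (x 2) (x 3) (x 4)) \<in> borel_measurable (PiM {..<5::nat} (\<lambda>_. lborel))"
  shows "(\<integral>\<^sup>+x. g (x 0) * (g (x 1) * (g (x 3) * (g (x 4) * (g (x 2) * h (x 0) (x 1) (x 2) (x 3) (x 4)))))
            \<partial>PiM {..<5::nat} (\<lambda>_. lborel))
       = (\<integral>\<^sup>+a. g a * (\<integral>\<^sup>+b. g b * (\<integral>\<^sup>+d. g d * (\<integral>\<^sup>+e. g e * (\<integral>\<^sup>+c. g c * h a b c d e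
            \<partial>lborel) \<partial>lborel) \<partial>lborel) \<partial>lborel) \<partial>lborel)"
proof -
  note g [measurable]
  have U: "{..<5} = insert 0 (insert 1 (insert 3 (insert 4 {2::nat})))" by auto
  have m0 [measurable]: "(\<lambda>x. h (x 0) (x 1) (x 2) (x 3) (x 4))
      \<in> borel_measurable (PiM (insert 0 (insert 1 (insert 3 (insert 4 {2::nat})))) (\<lambda>_. lborel))"
    using h unfolding U .
  have m1 [measurable]: "(\<lambda>x. h a (x 1) (x 2) (x 3) (x 4))
      \<in> borel_measurable (PiM (insert 1 (insert 3 (insert 4 {2::nat}))) (\<lambda>_. lborel))" for a
    using measurable_fun_upd_PiM[OF m0, of a] by simp
  have m2 [measurable]: "(\<lambda>x. h a b (x 2) (x 3) (x 4))
      \<in> borel_measurable (PiM (insert 3 (insert 4 {2::nat})) (\<lambda>_. lborel))" for a b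
    using measurable_fun_upd_PiM[OF m1[of a], of b] by simp
  have m3 [measurable]: "(\<lambda>x. h a b (x 2) d (x 4)) \<in> borel_measurable (PiM (insert 4 {2::nat}) (\<lambda>_. lborel))"
    for a b d
    using measurable_fun_upd_PiM[OF m2[of a b], of d] by simp
  have m4: "(\<lambda>x. h a b (x 2) d e) \<in> borel_measurable (PiM {2::nat} (\<lambda>_. lborel))" for a b d e
    using measurable_fun_upd_PiM[OF m3[of a b d], of e] by simp
  have "(\<lambda>c. (\<lambda>j::nat. if j = 2 then c else undefined)) \<in> measurable lborel (PiM {2} (\<lambda>_. lborel))"
    by (rule measurable_PiM_single') (auto simp: PiE_def extensional_def)
  from measurable_comp[OF this m4]
  have m5 [measurable]: "(\<lambda>c. h a b c d e) \<in> borel_measurable lborel" for a b d e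
    by (simp add: comp_def)
  have peel_a: "(\<integral>\<^sup>+x. g (x 0) * (g (x 1) * (g (x 3) * (g (x 4) * (g (x 2) * h (x 0) (x 1) (x 2) (x 3) (x 4)))))
        \<partial>PiM (insert 0 (insert 1 (insert 3 (insert 4 {2::nat})))) (\<lambda>_. lborel))
      = (\<integral>\<^sup>+a. g a * (\<integral>\<^sup>+x. g (x 1) * (g (x 3) * (g (x 4) * (g (x 2) * h a (x 1) (x 2) (x 3) (x 4))))
        \<partial>PiM (insert 1 (insert 3 (insert 4 {2::nat}))) (\<lambda>_. lborel)) \<partial>lborel)"
    by (subst nn_integral_PiM_insert_weight; (measurable | simp))
  have peel_b: "(\<integral>\<^sup>+x. g (x 1) * (g (x 3) * (g (x 4) * (g (x 2) * h a (x 1) (x 2) (x 3) (x 4))))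
        \<partial>PiM (insert 1 (insert 3 (insert 4 {2::nat}))) (\<lambda>_. lborel))
      = (\<integral>\<^sup>+b. g b * (\<integral>\<^sup>+x. g (x 3) * (g (x 4) * (g (x 2) * h a b (x 2) (x 3) (x 4)))
        \<partial>PiM (insert 3 (insert 4 {2::nat})) (\<lambda>_. lborel)) \<partial>lborel)" for a
    by (subst nn_integral_PiM_insert_weight; (measurable | simp))
  have peel_d: "(\<integral>\<^sup>+x. g (x 3) * (g (x 4) * (g (x 2) * h a b (x 2) (x 3) (x 4)))
        \<partial>PiM (insert 3 (insert 4 {2::nat})) (\<lambda>_. lborel))
      = (\<integral>\<^sup>+d. g d * (\<integral>\<^sup>+x. g (x 4) * (g (x 2) * h a b (x 2) d (x 4))
        \<partial>PiM (insert 4 {2::nat}) (\<lambda>_. lborel)) \<partial>lborel)" for a b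
    by (subst nn_integral_PiM_insert_weight; (measurable | simp))
  have peel_e: "(\<integral>\<^sup>+x. g (x 4) * (g (x 2) * h a b (x 2) d (x 4)) \<partial>PiM (insert 4 {2::nat}) (\<lambda>_. lborel))
      = (\<integral>\<^sup>+e. g e * (\<integral>\<^sup>+x. g (x 2) * h a b (x 2) d e \<partial>PiM {2::nat} (\<lambda>_. lborel)) \<partial>lborel)" for a b d
    using m4 by (subst nn_integral_PiM_insert_weight; (measurable | simp))
  have peel_c: "(\<integral>\<^sup>+x. g (x 2) * h a b (x 2) d e \<partial>PiM {2::nat} (\<lambda>_. lborel))
      = (\<integral>\<^sup>+c. g c * h a b c d e \<partial>lborel)" for a b d e
    by (rule lborel_product.product_nn_integral_singleton) measurable
  show ?thesis
    unfolding U peel_a peel_b peel_d peel_e peel_c ..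
qed

section \<open>The value of E_T as a function of the biases\<close>

lemma all_less_5: "(\<forall>i<(5::nat). P i) \<longleftrightarrow> P 0 \<and> P 1 \<and> P 2 \<and> P 3 \<and> P 4"
  by (auto simp: less_Suc_eq numeral_eq_Suc)

lemma sum_less_5: "(\<Sum>i<(5::nat). f i) = f 0 + f 1 + f 2 + f 3 + (f 4 :: real)"
  by (simp add: numeral_eq_Suc)

lemma indicator_exp_sum_5:
  fixes x :: "nat \<Rightarrow> real"
  shows "indicator {x. \<forall>i<5. 0 \<le> x i} x * ennreal (r * exp (- (\<Sum>i<5. x i)))
    = exp_weight (x 0) * (exp_weight (x 1) * (exp_weight (x 3) * (exp_weight (x 4) * (exp_weight (x 2) * ennreal r))))"
proof (cases "\<forall>i<5. 0 \<le> x i")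
  case True
  have "exp_weight (x 0) * (exp_weight (x 1) * (exp_weight (x 3) * (exp_weight (x 4) * (exp_weight (x 2) * ennreal r))))
      = ennreal (exp (- x 0) * (exp (- x 1) * (exp (- x 3) * (exp (- x 4) * (exp (- x 2) * r)))))"
    using True by (simp add: all_less_5 exp_weight_def ennreal_mult')
  also have "exp (- x 0) * (exp (- x 1) * (exp (- x 3) * (exp (- x 4) * (exp (- x 2) * r))))
      = r * exp (- (\<Sum>i<5. x i))"
    by (simp add: sum_less_5 mult_exp_exp algebra_simps)
  finally show ?thesis using True by simp
next
  case False
  then obtain i where "i < 5" "x i < 0" by (auto simp: not_le)
  then have "exp_weight (x i) = 0" by (simp add: exp_weight_eq_0_iff)
  with \<open>i < 5\<close> False show ?thesis by (auto simp: less_Suc_eq numeral_eq_Suc)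
qed

text \<open>For leaf biases \<beta> and central bias k: integrating out the central edge, then the pair
  of leaf edges at w, then the pair at v gives 4\<beta> + k (2/(2 + \<beta>/k))^2.\<close>

lemma tree5_integral:
  fixes \<beta> k :: real
  assumes \<beta>: "0 \<le> \<beta>" and k: "0 < k"
  shows "(\<integral>\<^sup>+x. indicator {x. \<forall>i<5. 0 \<le> x i} x
            * ennreal ((\<beta> * (max (x 0) (x 1) + max (x 3) (x 4)) + max (\<beta> * (min (x 0) (x 1) + min (x 3) (x 4))) (k * x 2))
                * exp (- (\<Sum>i<5. x i))) \<partial>PiM {..<5::nat} (\<lambda>_. lborel))
       = ennreal (4 * \<beta> + k * (2 / (2 + \<beta> / k))\<^sup>2)"
    (is "?E = _")
proof -
  define \<delta> where "\<delta> = \<beta> / k"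
  define \<rho> where "\<rho> = 2 / (2 + \<delta>)"
  have \<delta>: "0 \<le> \<delta>" using \<beta> k by (simp add: \<delta>_def)
  have \<rho>: "0 \<le> \<rho>" using \<delta> by (simp add: \<rho>_def)
  define f where "f a b c d e = \<beta> * (max a b + max d e) + max (\<beta> * (min a b + min d e)) (k * c)"
    for a b c d e :: real
  let ?w = exp_weight
  have center: "(\<integral>\<^sup>+c. ?w c * ennreal (f a b c d e) \<partial>lborel)
      = ennreal (\<beta> * (a + b) + \<beta> * (d + e) + k * exp (- (\<delta> * min a b)) * exp (- (\<delta> * min d e)))"
    if "0 \<le> a" "0 \<le> b" "0 \<le> d" "0 \<le> e" for a b d e
  proof -
    have "(\<integral>\<^sup>+c. ?w c * ennreal (f a b c d e) \<partial>lborel)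
        = ennreal (\<beta> * (max a b + max d e) + \<beta> * (min a b + min d e)
            + k * exp (- (\<beta> * (min a b + min d e) / k)))"
      unfolding f_def using that \<beta> k by (intro exp_mean_max) auto
    also have "\<dots> = ennreal (\<beta> * (a + b) + \<beta> * (d + e) + k * exp (- (\<delta> * min a b)) * exp (- (\<delta> * min d e)))"
    proof -
      have "exp (- (\<beta> * (min a b + min d e) / k)) = exp (- (\<delta> * min a b)) * exp (- (\<delta> * min d e))"
        unfolding \<delta>_def mult_exp_exp by (rule arg_cong[where f=exp]) (simp add: add_divide_distrib ring_distribs)
      then show ?thesis
        by (simp only:) (rule arg_cong[where f=ennreal], simp add: max_def min_def algebra_simps)
    qed
    finally show ?thesis .
  qed
  have integrand: "indicator {x. \<forall>i<5. 0 \<le> x i} x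
      * ennreal ((\<beta> * (max (x 0) (x 1) + max (x 3) (x 4)) + max (\<beta> * (min (x 0) (x 1) + min (x 3) (x 4))) (k * x 2))
          * exp (- (\<Sum>i<5. x i)))
      = ?w (x 0) * (?w (x 1) * (?w (x 3) * (?w (x 4) * (?w (x 2) * ennreal (f (x 0) (x 1) (x 2) (x 3) (x 4))))))"
    for x :: "nat \<Rightarrow> real"
    unfolding f_def by (rule indicator_exp_sum_5)
  have outer_pair: "(\<integral>\<^sup>+d. ?w d * (\<integral>\<^sup>+e. ?w e *
      ennreal (\<beta> * (a + b) + \<beta> * (d + e) + k * exp (- (\<delta> * min a b)) * exp (- (\<delta> * min d e)))
      \<partial>lborel) \<partial>lborel)
      = ennreal (\<beta> * (a + b) + 2 * \<beta> + k * exp (- (\<delta> * min a b)) * \<rho>)"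
    if "0 \<le> a" "0 \<le> b" for a b
    by (rule exp_mean_pair[where \<alpha>="\<beta> * (a + b)" and \<beta>=\<beta> and \<gamma>="k * exp (- (\<delta> * min a b))"
          and \<delta>=\<delta>])
      (use that \<beta> k \<delta> in \<open>auto simp: \<rho>_def\<close>)
  have "?E = (\<integral>\<^sup>+a. ?w a * (\<integral>\<^sup>+b. ?w b * (\<integral>\<^sup>+d. ?w d * (\<integral>\<^sup>+e. ?w e *
      (\<integral>\<^sup>+c. ?w c * ennreal (f a b c d e) \<partial>lborel) \<partial>lborel) \<partial>lborel) \<partial>lborel) \<partial>lborel)"
    unfolding integrand
    by (rule nn_integral_PiM5_weighted[where h="\<lambda>a b c d e. ennreal (f a b c d e)"])
      (unfold f_def, measurable)+
  also have "\<dots> = (\<integral>\<^sup>+a. ?w a * (\<integral>\<^sup>+b. ?w b * (\<integral>\<^sup>+d. ?w d * (\<integral>\<^sup>+e. ?w e *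
      ennreal (\<beta> * (a + b) + \<beta> * (d + e) + k * exp (- (\<delta> * min a b)) * exp (- (\<delta> * min d e)))
      \<partial>lborel) \<partial>lborel) \<partial>lborel) \<partial>lborel)"
    by (intro nn_integral_exp_weight_cong) (rule center)
  also have "\<dots> = (\<integral>\<^sup>+a. ?w a * (\<integral>\<^sup>+b. ?w b *
      ennreal (\<beta> * (a + b) + 2 * \<beta> + k * exp (- (\<delta> * min a b)) * \<rho>) \<partial>lborel) \<partial>lborel)"
    by (intro nn_integral_exp_weight_cong) (rule outer_pair)
  also have "\<dots> = ennreal (2 * \<beta> + 2 * \<beta> + k * \<rho> * \<rho>)"
    by (rule exp_mean_pair[where \<alpha>="2 * \<beta>" and \<beta>=\<beta> and \<gamma>="k * \<rho>" and \<delta>=\<delta>])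
      (use \<beta> k \<delta> \<rho> in \<open>auto simp: \<rho>_def algebra_simps\<close>)
  also have "2 * \<beta> + 2 * \<beta> + k * \<rho> * \<rho> = 4 * \<beta> + k * (2 / (2 + \<beta> / k))\<^sup>2"
    by (simp add: \<rho>_def \<delta>_def power2_eq_square)
  finally show ?thesis .
qed

section \<open>The numerical value\<close>

lemma tree5_closed_form:
  fixes b :: real
  assumes "0 < b" "b < 1/4"
  shows "4 * b + (1 - 4 * b) * (2 / (2 + b / (1 - 4 * b)))\<^sup>2 =
    4 * (1 - 3 * b) * (5 * b^2 - 5 * b + 1) / (7 * b - 2)^2"
proof -
  have k: "1 - 4 * b \<noteq> 0" and s: "2 - 7 * b \<noteq> 0" using assms by auto
  have ratio: "2 / (2 + b / (1 - 4 * b)) = 2 * (1 - 4 * b) / (2 - 7 * b)"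
    using k s by (simp add: field_simps)
  have "(7 * b - 2)^2 = (2 - 7 * b)^2" by (simp add: power2_eq_square algebra_simps)
  moreover have "(2 - 7 * b)^2 \<noteq> 0" using s by simp
  ultimately show ?thesis
    unfolding ratio by (simp add: field_simps power2_eq_square)
qed

lemma power_bounds_on_interval:
  fixes t U :: real
  assumes t: "0 \<le> t" "t \<le> U"
  shows "0 \<le> t^2" "t^2 \<le> U * t" "0 \<le> t^3" "t^3 \<le> U * U * t"
proof -
  have U: "0 \<le> U" using t by simp
  show "0 \<le> t^2" by simp
  show t2: "t^2 \<le> U * t" unfolding power2_eq_square using mult_right_mono[OF t(2) t(1)] .
  show "0 \<le> t^3" using t by simp
  have "t^3 = t^2 * t" by (simp add: power3_eq_cube power2_eq_square)
  also have "\<dots> \<le> (U * t) * t" using mult_right_mono[OF t2 t(1)] .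
  also have "\<dots> = U * t^2" by (simp add: power2_eq_square)
  also have "\<dots> \<le> U * (U * t)" using mult_left_mono[OF t2 U] .
  finally show "t^3 \<le> U * U * t" by simp
qed

text \<open>The cubic 105b^3 - 90b^2 + 24b - 2 is negative on (0, 0.172] and positive on
  [0.1722, 1/4), so its root in (0, 1/4) lies in (0.172, 0.1722).  Each bound is a Taylor
  expansion at a rational point together with the bounds above.\<close>

lemma cubic_root_bracket:
  fixes b :: real
  assumes b: "0 < b" "b < 1/4" and root: "105 * b^3 - 90 * b^2 + 24 * b - 2 = 0"
  shows "0.172 < b" "b < 0.1722"
proof -
  show "0.172 < b"
  proof (rule ccontr)
    assume "\<not> 0.172 < b"
    define t where "t = 43/250 - b"
    have t: "0 \<le> t" using \<open>\<not> 0.172 < b\<close> by (simp add: t_def)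
    have "105 * b^3 - 90 * b^2 + 24 * b - 2
        = - 853/3125000 - 29487/12500 * t - 1791/50 * t^2 - 105 * t^3"
      by (simp add: t_def power2_eq_square power3_eq_cube field_simps)
    moreover have "0 \<le> t^2" "0 \<le> t^3" using t by simp_all
    ultimately show False using root t by linarith
  qed
  show "b < 0.1722"
  proof (rule ccontr)
    assume "\<not> b < 0.1722"
    show False
    proof (cases "b \<le> 0.2")
      case True
      define t where "t = b - 861/5000"
      have t: "0 \<le> t" "t \<le> 139/5000" using \<open>\<not> b < 0.1722\<close> True by (simp_all add: t_def)
      have "105 * b^3 - 90 * b^2 + 24 * b - 2
          = 4935001/25000000000 + 11723223/5000000 * t - 35757/1000 * t^2 + 105 * t^3"
        by (simp add: t_def power2_eq_square power3_eq_cube field_simps)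
      then show False using root t power_bounds_on_interval[OF t] by linarith
    next
      case False
      define t where "t = 1/4 - b"
      have t: "0 \<le> t" "t \<le> 1/20" using b False by (simp_all add: t_def)
      have "105 * b^3 - 90 * b^2 + 24 * b - 2 = 1/64 + 21/16 * t - 45/4 * t^2 - 105 * t^3"
        by (simp add: t_def power2_eq_square power3_eq_cube field_simps)
      then show False using root t power_bounds_on_interval[OF t] by linarith
    qed
  qed
qed

lemma closed_form_bounds:
  fixes b :: real
  assumes "0.172 < b" "b < 0.1722"
  shows "0.8797 < 4 * (1 - 3 * b) * (5 * b^2 - 5 * b + 1) / (7 * b - 2)^2"
    "4 * (1 - 3 * b) * (5 * b^2 - 5 * b + 1) / (7 * b - 2)^2 < 0.8798"
proof -
  define t where "t = b - 43/250"
  have t: "0 \<le> t" "t \<le> 1/5000" using assms by (simp_all add: t_def)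
  note powers = power_bounds_on_interval[OF t]
  have pos: "0 < (7 * b - 2)^2" using assms by simp
  have "4 * (1 - 3 * b) * (5 * b^2 - 5 * b + 1) - 0.8797 * (7 * b - 2)^2
      = 13203/625000000 - 2179/1250000 * t + 59347/10000 * t^2 - 60 * t^3"
    by (simp add: t_def power2_eq_square power3_eq_cube field_simps)
  then have "0.8797 * (7 * b - 2)^2 < 4 * (1 - 3 * b) * (5 * b^2 - 5 * b + 1)"
    using t powers by linarith
  then show "0.8797 < 4 * (1 - 3 * b) * (5 * b^2 - 5 * b + 1) / (7 * b - 2)^2"
    by (simp add: pos_less_divide_eq[OF pos])
  have "0.8798 * (7 * b - 2)^2 - 4 * (1 - 3 * b) * (5 * b^2 - 5 * b + 1)
      = 13199/312500000 + 393/625000 * t - 29649/5000 * t^2 + 60 * t^3"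
    by (simp add: t_def power2_eq_square power3_eq_cube field_simps)
  then have "4 * (1 - 3 * b) * (5 * b^2 - 5 * b + 1) < 0.8798 * (7 * b - 2)^2"
    using t powers by linarith
  then show "4 * (1 - 3 * b) * (5 * b^2 - 5 * b + 1) / (7 * b - 2)^2 < 0.8798"
    by (simp add: pos_divide_less_eq[OF pos])
qed

theorem mainTheorem8:
  fixes b :: real
  assumes "0 < b" "b < 1/4" "105 * b^3 - 90 * b^2 + 24 * b - 2 = 0"
  shows "is_biased_tree {0..5} 5 tree5_E (tree5_b b)
       \<and> ET {0..5} 5 tree5_E (tree5_b b) =
           ennreal (4 * (1 - 3*b) * (5 * b^2 - 5*b + 1) / (7*b - 2)^2)
       \<and> 0.8797 < 4 * (1 - 3*b) * (5 * b^2 - 5*b + 1) / (7*b - 2)^2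
       \<and> 4 * (1 - 3*b) * (5 * b^2 - 5*b + 1) / (7*b - 2)^2 < 0.8798
       \<and> admissible 5 0.8798"
proof -
  have tree: "is_biased_tree {0..5} 5 tree5_E (tree5_b b)"
    using assms by (intro tree5_biased) auto
  have ET_value: "ET {0..5} 5 tree5_E (tree5_b b) = ennreal (4 * (1 - 3*b) * (5 * b^2 - 5*b + 1) / (7*b - 2)^2)"
  proof -
    have b: "0 \<le> b" and k: "0 < 1 - 4 * b" using assms by simp_all
    show ?thesis
      unfolding ET_def tree5_fT[OF b] tree5_integral[OF b k] tree5_closed_form[OF assms(1,2)] ..
  qed
  have bracket: "0.172 < b" "b < 0.1722" using cubic_root_bracket[OF assms] by simp_all
  note bounds = closed_form_bounds[OF bracket]
  have "admissible 5 0.8798"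
    unfolding admissible_def using tree ET_value bounds(2)
    by (intro conjI exI[of _ "{0..5}"] exI[of _ tree5_E] exI[of _ "tree5_b b"]) (simp_all add: ennreal_lessI)
  with tree ET_value bounds show ?thesis by blast
qed

end
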